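(* Let $ABC$ be a hyperbolic triangle with sides $a=BC$, $b=CA$, $c=AB$ and angles $\alpha,\beta,\gamma$ at $A,B,C$ respectively, such that $\alpha>\pi/2$. Then $$\pi-\alpha<\beta+\gamma\cosh a.$$ *)

theory Defs
  imports "HOL-Analysis.Analysis"
begin

text \<open>Hyperboloid model of the hyperbolic plane: points of R^3 (as triples)
  with Minkowski form -x0 y0 + x1 y1 + x2 y2 equal to -1 and x0 > 0.\<close>

type_synonym mpt = "real \<times> real \<times> real"

definition mink :: "mpt \<Rightarrow> mpt \<Rightarrow> real" where
  "mink p q = - fst p * fst q + fst (snd p) * fst (snd q) + snd (snd p) * snd (snd q)"

definition hyp_point :: "mpt \<Rightarrow> bool" where
  "hyp_point p \<longleftrightarrow> mink p p = -1 \<and> fst p > 0"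

definition hdist :: "mpt \<Rightarrow> mpt \<Rightarrow> real" where
  "hdist p q = arcosh (- mink p q)"

text \<open>Initial tangent vector at a of the geodesic from a to p
  (projection of p onto the tangent space at a).\<close>
definition tvec :: "mpt \<Rightarrow> mpt \<Rightarrow> mpt" where
  "tvec a p = p + mink a p *\<^sub>R a"

definition hangle :: "mpt \<Rightarrow> mpt \<Rightarrow> mpt \<Rightarrow> real" where
  "hangle a p q = arccos (mink (tvec a p) (tvec a q) /
      sqrt (mink (tvec a p) (tvec a p) * mink (tvec a q) (tvec a q)))"

text \<open>A (non-degenerate) hyperbolic triangle: three points of the hyperbolic plane
  not on a common geodesic, i.e. linearly independent as vectors of R^3.\<close>
definition hyp_triangle :: "mpt \<Rightarrow> mpt \<Rightarrow> mpt \<Rightarrow> bool" where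
  "hyp_triangle A B C \<longleftrightarrow> hyp_point A \<and> hyp_point B \<and> hyp_point C \<and>
     (\<forall>r s t. r *\<^sub>R A + s *\<^sub>R B + t *\<^sub>R C = 0 \<longrightarrow> r = 0 \<and> s = 0 \<and> t = 0)"

end

theory Submission
  imports Defs
begin

text \<open>Write x, y, z for the hyperbolic cosines of the sides a, b, c. By the hyperbolic law of
  cosines the angles are functions of x, y, z, and a trigonometric computation shows that the
  angle defect D = pi - (alpha + beta + gamma) satisfies tan (D/2) = r / (1 + x + y + z), where
  r^2 = 1 + 2xyz - x^2 - y^2 - z^2 is the squared determinant of the vertices. Hence
  D <= 2r / (1 + x + y + z). An obtuse angle at A forces yz < x, so b < a, and then
  2r / (1 + x + y + z) < (x - 1) r / (sinh a sinh b) = (x - 1) sin gamma <= (x - 1) gamma.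
  The resulting inequality D < (cosh a - 1) gamma is the claim.\<close>

definition cosh_gram :: "real \<Rightarrow> real \<Rightarrow> real \<Rightarrow> real" where
  "cosh_gram x y z = 1 + 2*x*y*z - x^2 - y^2 - z^2"

text \<open>The angle opposite the side with hyperbolic cosine x, by the hyperbolic law of cosines.\<close>
definition cosh_law_angle :: "real \<Rightarrow> real \<Rightarrow> real \<Rightarrow> real" where
  "cosh_law_angle x y z = arccos ((y*z - x) / (sqrt (y^2 - 1) * sqrt (z^2 - 1)))"

definition cosh_law_defect :: "real \<Rightarrow> real \<Rightarrow> real \<Rightarrow> real" where
  "cosh_law_defect x y z =
     pi - (cosh_law_angle x y z + cosh_law_angle y z x + cosh_law_angle z x y)"

lemma cosh_gram_rotate: "cosh_gram x y z = cosh_gram y z x"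
  by (simp add: cosh_gram_def algebra_simps)

lemma square_add_cosh_gram: "(y*z - x)^2 + cosh_gram x y z = (y^2 - 1) * (z^2 - 1)"
  by (simp add: cosh_gram_def power2_eq_square algebra_simps)

lemma cosh_gram_pos_imp_gt_one:
  fixes x y z :: real
  assumes "1 \<le> x" "1 \<le> y" "1 \<le> z" "0 < cosh_gram x y z"
  shows "1 < x \<and> 1 < y \<and> 1 < z"
proof -
  have "cosh_gram 1 y z = - ((y - z)^2)" "cosh_gram x 1 z = - ((x - z)^2)"
    "cosh_gram x y 1 = - ((x - y)^2)"
    by (simp_all add: cosh_gram_def power2_eq_square algebra_simps)
  then show ?thesis
    using assms by (smt (verit, best) zero_le_power2)
qed

lemma sqrt_sq_minus_one_pos: "1 < y \<Longrightarrow> 0 < sqrt (y^2 - 1 :: real)"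
  by (simp add: one_less_power)

lemma cosh_law_cos_bounded:
  assumes "1 < y" "1 < z" "0 < cosh_gram x y z"
  shows "\<bar>(y*z - x) / (sqrt (y^2 - 1) * sqrt (z^2 - 1))\<bar> < 1"
proof -
  define S where "S = sqrt (y^2 - 1) * sqrt (z^2 - 1)"
  have "1 < y^2" "1 < z^2" using assms by (simp_all add: one_less_power)
  then have S_pos: "0 < S" and S_sq: "S^2 = (y^2 - 1) * (z^2 - 1)"
    by (simp_all add: S_def power_mult_distrib)
  have "\<bar>y*z - x\<bar>^2 < S^2"
    using square_add_cosh_gram[of y z x] assms(3) by (simp add: S_sq)
  then have "\<bar>y*z - x\<bar> < S"
    using S_pos by (meson abs_ge_zero less_le power_less_imp_less_base)
  then show ?thesis
    using S_pos by (simp flip: S_def)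
qed

lemma cos_cosh_law_angle:
  assumes "1 < y" "1 < z" "0 < cosh_gram x y z"
  shows "cos (cosh_law_angle x y z) = (y*z - x) / (sqrt (y^2 - 1) * sqrt (z^2 - 1))"
  using cosh_law_cos_bounded[OF assms] by (simp add: cosh_law_angle_def cos_arccos_abs)

lemma sin_cosh_law_angle:
  assumes "1 < y" "1 < z" "0 < cosh_gram x y z"
  shows "sin (cosh_law_angle x y z) = sqrt (cosh_gram x y z) / (sqrt (y^2 - 1) * sqrt (z^2 - 1))"
proof -
  have "1 < y^2" "1 < z^2" using assms by (simp_all add: one_less_power)
  then have "1 - ((y*z - x) / (sqrt (y^2 - 1) * sqrt (z^2 - 1)))^2
      = cosh_gram x y z / (sqrt (y^2 - 1) * sqrt (z^2 - 1))^2"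
    using square_add_cosh_gram[of y z x] by (simp add: power_divide power_mult_distrib divide_simps)
  then show ?thesis
    using cosh_law_cos_bounded[OF assms] assms
    by (simp add: cosh_law_angle_def sin_arccos_abs real_sqrt_divide sqrt_sq_minus_one_pos less_imp_le)
qed

lemma cosh_law_angle_bounds:
  assumes "1 < y" "1 < z" "0 < cosh_gram x y z"
  shows "0 < cosh_law_angle x y z \<and> cosh_law_angle x y z < pi"
  using cosh_law_cos_bounded[OF assms] unfolding cosh_law_angle_def abs_less_iff
  by (intro arccos_lt_bounded) simp_all

lemma cosh_law_angle_obtuse:
  assumes "1 < y" "1 < z" "0 < cosh_gram x y z" "pi/2 < cosh_law_angle x y z"
  shows "y*z < x"
proof (rule ccontr)
  assume "\<not> y*z < x"
  then have "0 \<le> (y*z - x) / (sqrt (y^2 - 1) * sqrt (z^2 - 1))"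
    using assms by (simp add: sqrt_sq_minus_one_pos less_imp_le)
  then have "cosh_law_angle x y z \<le> pi/2"
    using cosh_law_cos_bounded[OF assms(1-3)] unfolding cosh_law_angle_def abs_less_iff
    by (intro arccos_le_pi2) simp_all
  with assms(4) show False by simp
qed

lemma cosh_law_defect_half_angle:
  fixes x y z :: real
  assumes "1 < x" "1 < y" "1 < z" "0 < cosh_gram x y z"
  defines "D \<equiv> cosh_law_defect x y z"
  shows "sin D * (1 + x + y + z) = sqrt (cosh_gram x y z) * (1 + cos D)"
proof -
  define \<alpha> \<beta> \<gamma> where "\<alpha> = cosh_law_angle x y z" "\<beta> = cosh_law_angle y z x" "\<gamma> = cosh_law_angle z x y"
  define u1 u2 u3 where "u1 = y*z - x" "u2 = z*x - y" "u3 = x*y - z"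
  define S1 S2 S3 where "S1 = sqrt (y^2 - 1) * sqrt (z^2 - 1)" "S2 = sqrt (z^2 - 1) * sqrt (x^2 - 1)"
    "S3 = sqrt (x^2 - 1) * sqrt (y^2 - 1)"
  define r where "r = sqrt (cosh_gram x y z)"
  define P where "P = (x^2 - 1) * (y^2 - 1) * (z^2 - 1)"
  have S_pos: "0 < S1" "0 < S2" "0 < S3"
    using assms(1-3) by (simp_all add: S1_S2_S3_def sqrt_sq_minus_one_pos)
  have "S1 * S2 * S3 = (sqrt (x^2 - 1))^2 * (sqrt (y^2 - 1))^2 * (sqrt (z^2 - 1))^2"
    by (simp add: S1_S2_S3_def power2_eq_square mult_ac)
  then have SSS: "S1 * S2 * S3 = P"
    using assms(1-3) by (simp add: P_def one_less_power less_imp_le)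
  have P_pos: "0 < P" using S_pos SSS by (metis mult_pos_pos)
  have r_sq: "r^2 = cosh_gram x y z" using assms(4) by (simp add: r_def)
  have gram_yzx: "0 < cosh_gram y z x" and gram_zxy: "0 < cosh_gram z x y"
    using assms(4) cosh_gram_rotate by metis+
  note cos_sin = cos_cosh_law_angle sin_cosh_law_angle
  have \<alpha>: "cos \<alpha> = u1 / S1" "sin \<alpha> = r / S1"
    using cos_sin[OF assms(2,3,4)] by (simp_all add: \<alpha>_\<beta>_\<gamma>_def u1_u2_u3_def S1_S2_S3_def r_def)
  have \<beta>: "cos \<beta> = u2 / S2" "sin \<beta> = r / S2"
    using cos_sin[OF assms(3,1) gram_yzx] cosh_gram_rotate[of x y z]
    by (simp_all add: \<alpha>_\<beta>_\<gamma>_def u1_u2_u3_def S1_S2_S3_def r_def)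
  have \<gamma>: "cos \<gamma> = u3 / S3" "sin \<gamma> = r / S3"
    using cos_sin[OF assms(1,2) gram_zxy] cosh_gram_rotate[of y z x] cosh_gram_rotate[of x y z]
    by (simp_all add: \<alpha>_\<beta>_\<gamma>_def u1_u2_u3_def S1_S2_S3_def r_def)
  have sin_sum: "sin (\<alpha> + \<beta> + \<gamma>) * P = r * (u2*u3 + u1*u3 + u1*u2 - r^2)"
    unfolding sin_add cos_add \<alpha> \<beta> \<gamma> SSS[symmetric] using S_pos
    by (simp add: field_simps power2_eq_square)
  have cos_sum: "cos (\<alpha> + \<beta> + \<gamma>) * P = u1*u2*u3 - r^2 * (u1 + u2 + u3)"
    unfolding sin_add cos_add \<alpha> \<beta> \<gamma> SSS[symmetric] using S_pos
    by (simp add: field_simps power2_eq_square)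
  \<comment> \<open>both sides equal (1 + x + y + z)^2 (x - 1) (y - 1) (z - 1)\<close>
  have poly: "(u2*u3 + u1*u3 + u1*u2 - r^2) * (1 + x + y + z) = P - (u1*u2*u3 - r^2 * (u1 + u2 + u3))"
    unfolding r_sq u1_u2_u3_def P_def cosh_gram_def by algebra
  have D: "D = pi - (\<alpha> + \<beta> + \<gamma>)"
    by (simp add: D_def cosh_law_defect_def \<alpha>_\<beta>_\<gamma>_def)
  have "sin D * (1 + x + y + z) * P = r * ((u2*u3 + u1*u3 + u1*u2 - r^2) * (1 + x + y + z))"
    using sin_sum by (simp add: D mult_ac)
  also have "\<dots> = r * (1 + cos D) * P"
    unfolding poly cos_sum[symmetric] by (simp add: D algebra_simps)
  finally show ?thesis
    using P_pos by (simp add: r_def)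
qed

lemma cosh_law_defect_le:
  fixes x y z :: real
  assumes "1 < x" "1 < y" "1 < z" "0 < cosh_gram x y z"
  shows "cosh_law_defect x y z \<le> 2 * sqrt (cosh_gram x y z) / (1 + x + y + z)"
proof (cases "cosh_law_defect x y z \<le> 0")
  case True
  have "0 \<le> 2 * sqrt (cosh_gram x y z) / (1 + x + y + z)"
    using assms by (intro divide_nonneg_pos) simp_all
  with True show ?thesis by linarith
next
  case False
  define h where "h = cosh_law_defect x y z / 2"
  have gram_rot: "0 < cosh_gram y z x" "0 < cosh_gram z x y"
    using assms(4) cosh_gram_rotate by metis+
  have "h < pi/2"
    using cosh_law_angle_bounds[OF assms(2-4)] cosh_law_angle_bounds[OF assms(3,1) gram_rot(1)]
      cosh_law_angle_bounds[OF assms(1,2) gram_rot(2)]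
    by (simp add: h_def cosh_law_defect_def)
  moreover have "0 < h" using False by (simp add: h_def)
  ultimately have cos_h: "0 < cos h" and "h \<le> tan h"
    using abs_tan_ge[of h] tan_gt_zero[of h] by (auto intro: cos_gt_zero_pi)
  have "2 * cos h * (sin h * (1 + x + y + z)) = 2 * cos h * (sqrt (cosh_gram x y z) * cos h)"
    using cosh_law_defect_half_angle[OF assms] sin_double[of h] cos_double_cos[of h]
    by (simp add: h_def power2_eq_square mult_ac)
  then have "sin h * (1 + x + y + z) = sqrt (cosh_gram x y z) * cos h"
    using cos_h by simp
  then have "tan h = sqrt (cosh_gram x y z) / (1 + x + y + z)"
    using cos_h assms(1-3) by (simp add: tan_def field_simps power2_eq_square)
  with \<open>h \<le> tan h\<close> show ?thesis by (simp add: h_def field_simps)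
qed

lemma two_sinh_mult_lt:
  fixes x y z :: real
  assumes "1 < y" "y \<le> x" "0 < cosh_gram z x y"
  shows "2 * sqrt ((x^2 - 1) * (y^2 - 1)) < (x - 1) * (1 + x + y + z)"
proof -
  define S where "S = sqrt ((x^2 - 1) * (y^2 - 1))"
  have "1 < x" using assms by simp
  have "1 < x^2" "1 < y^2" using assms(1) \<open>1 < x\<close> by (simp_all add: one_less_power)
  then have "0 \<le> (x^2 - 1) * (y^2 - 1)" by simp
  then have "0 \<le> S" and S_sq: "S^2 = (x^2 - 1) * (y^2 - 1)" by (simp_all add: S_def)
  have "(x*y - z)^2 < S^2"
    using square_add_cosh_gram[of x y z] assms(3) by (simp add: S_sq)
  then have "x*y - z < S"
    using \<open>0 \<le> S\<close> by (rule power2_less_imp_less)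
  have "0 \<le> (x - 1) * (y + 1)" using \<open>1 < x\<close> assms(1) by simp
  have "S^2 \<le> ((x - 1) * (y + 1))^2"
  proof -
    have "S^2 = ((x - 1) * (y + 1)) * ((x + 1) * (y - 1))"
      unfolding S_sq by (simp add: power2_eq_square algebra_simps)
    also have "\<dots> \<le> ((x - 1) * (y + 1)) * ((x - 1) * (y + 1))"
      using \<open>0 \<le> (x - 1) * (y + 1)\<close> assms(2) by (intro mult_left_mono) (simp_all add: algebra_simps)
    finally show ?thesis by (simp add: power2_eq_square)
  qed
  then have "S \<le> (x - 1) * (y + 1)"
    using \<open>0 \<le> (x - 1) * (y + 1)\<close> by (rule power2_le_imp_le)
  have "2 * S = (x + 1) * S - (x - 1) * S" by (simp add: algebra_simps)
  also have "\<dots> \<le> (x + 1) * ((x - 1) * (y + 1)) - (x - 1) * S"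
    using \<open>S \<le> (x - 1) * (y + 1)\<close> \<open>1 < x\<close> by simp
  also have "\<dots> = (x - 1) * (1 + x + y + (x*y - S))" by (simp add: algebra_simps)
  also have "\<dots> < (x - 1) * (1 + x + y + z)"
    using \<open>x*y - z < S\<close> \<open>1 < x\<close> by simp
  finally show ?thesis by (simp add: S_def)
qed

lemma cosh_law_obtuse_angle_bound:
  fixes x y z :: real
  assumes "1 < x" "1 < y" "1 < z" "0 < cosh_gram x y z" "pi/2 < cosh_law_angle x y z"
  shows "pi - cosh_law_angle x y z < cosh_law_angle y z x + cosh_law_angle z x y * x"
proof -
  define \<gamma> where "\<gamma> = cosh_law_angle z x y"
  define r where "r = sqrt (cosh_gram x y z)"
  define W where "W = 1 + x + y + z"
  define S where "S = sqrt (x^2 - 1) * sqrt (y^2 - 1)"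
  have gram_zxy: "0 < cosh_gram z x y"
    using assms(4) cosh_gram_rotate by metis
  have "0 < r" "0 < W" "0 < S"
    using assms by (simp_all add: r_def W_def S_def sqrt_sq_minus_one_pos)
  have "y*z < x" using cosh_law_angle_obtuse[OF assms(2-5)] .
  moreover have "y < y*z" using assms(2,3) by simp
  ultimately have "y < x" by linarith
  have "cosh_law_defect x y z \<le> 2 * r / W"
    using cosh_law_defect_le[OF assms(1-4)] by (simp add: r_def W_def)
  also have "\<dots> < (x - 1) * (r / S)"
  proof -
    have "2 * S < (x - 1) * W"
      using two_sinh_mult_lt[OF assms(2) less_imp_le[OF \<open>y < x\<close>] gram_zxy]
      unfolding real_sqrt_mult by (simp add: S_def W_def)
    then have "2 * S * r < (x - 1) * W * r"
      using \<open>0 < r\<close> by simp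
    then show ?thesis
      using \<open>0 < W\<close> \<open>0 < S\<close> by (simp add: field_simps)
  qed
  also have "r / S = sin \<gamma>"
    using sin_cosh_law_angle[OF assms(1,2) gram_zxy] cosh_gram_rotate[of z x y] cosh_gram_rotate[of x y z]
    by (simp add: \<gamma>_def r_def S_def)
  also have "(x - 1) * sin \<gamma> \<le> (x - 1) * \<gamma>"
    using sin_x_le_x[of \<gamma>] cosh_law_angle_bounds[OF assms(1,2) gram_zxy] assms(1)
    by (simp add: \<gamma>_def)
  finally show ?thesis
    by (simp add: cosh_law_defect_def \<gamma>_def algebra_simps)
qed

lemma mink_commute: "mink p q = mink q p"
  by (simp add: mink_def mult.commute)

lemma mink_tvec:
  assumes "hyp_point P"
  shows "mink (tvec P Q) (tvec P R) = mink Q R + mink P Q * mink P R"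
proof -
  obtain p0 p1 p2 where P: "P = (p0, p1, p2)" by (cases P) auto
  obtain q0 q1 q2 where Q: "Q = (q0, q1, q2)" by (cases Q) auto
  obtain r0 r1 r2 where R: "R = (r0, r1, r2)" by (cases R) auto
  have "- p0 * p0 + p1 * p1 + p2 * p2 = -1"
    using assms by (simp add: hyp_point_def mink_def P)
  then show ?thesis
    unfolding tvec_def P Q R mink_def
    by (simp only: prod.sel fst_add snd_add fst_scaleR snd_scaleR real_scaleR_def) algebra
qed

lemma hangle_eq_cosh_law_angle:
  assumes "hyp_point P" "hyp_point Q" "hyp_point R"
  shows "hangle P Q R = cosh_law_angle (- mink Q R) (- mink P R) (- mink P Q)"
proof -
  have "mink (tvec P Q) (tvec P Q) = (- mink P Q)^2 - 1"
    and "mink (tvec P R) (tvec P R) = (- mink P R)^2 - 1"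
    using mink_tvec[OF assms(1)] assms(2,3) by (simp_all add: hyp_point_def power2_eq_square)
  moreover have "mink (tvec P Q) (tvec P R) = (- mink P R) * (- mink P Q) - (- mink Q R)"
    using mink_tvec[OF assms(1)] by simp
  ultimately show ?thesis
    by (simp add: hangle_def cosh_law_angle_def real_sqrt_mult mult.commute)
qed

lemma hyp_point_mink_le:
  assumes "hyp_point P" "hyp_point Q"
  shows "mink P Q \<le> -1"
proof -
  obtain p0 p1 p2 where P: "P = (p0, p1, p2)" by (cases P) auto
  obtain q0 q1 q2 where Q: "Q = (q0, q1, q2)" by (cases Q) auto
  have p: "p0^2 = 1 + p1^2 + p2^2" "0 < p0" and q: "q0^2 = 1 + q1^2 + q2^2" "0 < q0"
    using assms unfolding hyp_point_def mink_def P Q by (simp_all add: power2_eq_square)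
  have "(p0*q0)^2 - (1 + (p1*q1 + p2*q2))^2 = (p1 - q1)^2 + (p2 - q2)^2 + (p1*q2 - p2*q1)^2"
    unfolding power_mult_distrib p q by algebra
  then have "(1 + (p1*q1 + p2*q2))^2 \<le> (p0*q0)^2"
    by (smt (verit) zero_le_power2)
  then have "1 + (p1*q1 + p2*q2) \<le> p0*q0"
    by (rule power2_le_imp_le) (use p(2) q(2) in simp)
  then show ?thesis by (simp add: mink_def P Q)
qed

fun det3 :: "mpt \<Rightarrow> mpt \<Rightarrow> mpt \<Rightarrow> real" where
  "det3 (a0, a1, a2) (b0, b1, b2) (c0, c1, c2) =
     a0 * (b1*c2 - b2*c1) - b0 * (a1*c2 - a2*c1) + c0 * (a1*b2 - a2*b1)"

lemma det3_neq_0_if_independent: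
  assumes "\<forall>r s t. r *\<^sub>R A + s *\<^sub>R B + t *\<^sub>R C = 0 \<longrightarrow> r = 0 \<and> s = 0 \<and> t = 0"
  shows "det3 A B C \<noteq> 0"
proof
  obtain a0 a1 a2 where A: "A = (a0, a1, a2)" by (cases A) auto
  obtain b0 b1 b2 where B: "B = (b0, b1, b2)" by (cases B) auto
  obtain c0 c1 c2 where C: "C = (c0, c1, c2)" by (cases C) auto
  assume "det3 A B C = 0"
  then have det: "a0 * (b1*c2 - b2*c1) - b0 * (a1*c2 - a2*c1) + c0 * (a1*b2 - a2*b1) = 0"
    by (simp add: A B C)
  have indep: "r = 0 \<and> s = 0 \<and> t = 0"
    if "r*a0 + s*b0 + t*c0 = 0" "r*a1 + s*b1 + t*c1 = 0" "r*a2 + s*b2 + t*c2 = 0" for r s t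
  proof -
    have "r *\<^sub>R A + s *\<^sub>R B + t *\<^sub>R C = 0"
      using that by (simp add: A B C zero_prod_def)
    with assms show ?thesis by blast
  qed
  \<comment> \<open>as det3 A B C = 0, each row of the adjugate matrix is a linear relation between A, B, C\<close>
  have minors0: "b1*c2 - b2*c1 = 0 \<and> c1*a2 - c2*a1 = 0 \<and> a1*b2 - a2*b1 = 0"
  proof (rule indep)
    show "(b1*c2 - b2*c1)*a0 + (c1*a2 - c2*a1)*b0 + (a1*b2 - a2*b1)*c0 = 0" using det by algebra
  qed algebra+
  have minors1: "b2*c0 - b0*c2 = 0 \<and> c2*a0 - c0*a2 = 0 \<and> a2*b0 - a0*b2 = 0"
  proof (rule indep)
    show "(b2*c0 - b0*c2)*a1 + (c2*a0 - c0*a2)*b1 + (a2*b0 - a0*b2)*c1 = 0" using det by algebra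
  qed algebra+
  have minors2: "b0*c1 - b1*c0 = 0 \<and> c0*a1 - c1*a0 = 0 \<and> a0*b1 - a1*b0 = 0"
  proof (rule indep)
    show "(b0*c1 - b1*c0)*a2 + (c0*a1 - c1*a0)*b2 + (a0*b1 - a1*b0)*c2 = 0" using det by algebra
  qed algebra+
  \<comment> \<open>all 2x2 minors vanish, so b_i A - a_i B = 0 for each i\<close>
  have "a0 = 0" "a1 = 0" "a2 = 0"
    using indep[of b0 "- a0" 0] indep[of b1 "- a1" 0] indep[of b2 "- a2" 0] minors0 minors1 minors2
    by (simp_all add: algebra_simps)
  then show False
    using indep[of 1 0 0] by simp
qed

lemma cosh_gram_mink_eq_det3_sq:
  assumes "mink A A = -1" "mink B B = -1" "mink C C = -1"
  shows "cosh_gram (- mink B C) (- mink C A) (- mink A B) = (det3 A B C)^2"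
proof -
  obtain a0 a1 a2 where A: "A = (a0, a1, a2)" by (cases A) auto
  obtain b0 b1 b2 where B: "B = (b0, b1, b2)" by (cases B) auto
  obtain c0 c1 c2 where C: "C = (c0, c1, c2)" by (cases C) auto
  \<comment> \<open>minus the determinant of the Minkowski Gram matrix of A, B, C\<close>
  have "cosh_gram (- mink B C) (- mink C A) (- mink A B)
      = - (mink A A * mink B B * mink C C + 2 * mink B C * mink C A * mink A B
           - mink A A * (mink B C)^2 - mink B B * (mink C A)^2 - mink C C * (mink A B)^2)"
    using assms by (simp add: cosh_gram_def)
  also have "\<dots> = (det3 A B C)^2"
    unfolding A B C mink_def det3.simps by (simp only: fst_conv snd_conv) algebra
  finally show ?thesis .
qed

lemma hyp_triangle_cosh_gram_pos:
  assumes "hyp_triangle A B C"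
  shows "0 < cosh_gram (- mink B C) (- mink C A) (- mink A B)"
  using assms det3_neq_0_if_independent[of A B C] cosh_gram_mink_eq_det3_sq[of A B C]
  by (simp add: hyp_triangle_def hyp_point_def)

theorem lemma5p2p5:
  fixes A B C :: mpt and a b c \<alpha> \<beta> \<gamma> :: real
  assumes "hyp_triangle A B C"
    and "a = hdist B C" and "b = hdist C A" and "c = hdist A B"
    and "\<alpha> = hangle A B C" and "\<beta> = hangle B C A" and "\<gamma> = hangle C A B"
    and "\<alpha> > pi / 2"
  shows "pi - \<alpha> < \<beta> + \<gamma> * cosh a"
proof -
  have pts: "hyp_point A" "hyp_point B" "hyp_point C"
    using assms(1) by (simp_all add: hyp_triangle_def)
  define x y z where "x = - mink B C" "y = - mink C A" "z = - mink A B"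
  have gram: "0 < cosh_gram x y z"
    using hyp_triangle_cosh_gram_pos[OF assms(1)] by (simp add: x_y_z_def)
  have "1 \<le> x" "1 \<le> y" "1 \<le> z"
    using hyp_point_mink_le[OF pts(2,3)] hyp_point_mink_le[OF pts(3,1)] hyp_point_mink_le[OF pts(1,2)]
    by (simp_all add: x_y_z_def)
  with gram have xyz: "1 < x" "1 < y" "1 < z"
    using cosh_gram_pos_imp_gt_one by blast+
  have angles: "\<alpha> = cosh_law_angle x y z" "\<beta> = cosh_law_angle y z x" "\<gamma> = cosh_law_angle z x y"
    using assms(5-7) pts by (simp_all add: hangle_eq_cosh_law_angle x_y_z_def mink_commute)
  have "cosh a = x"
    using \<open>1 \<le> x\<close> by (simp add: assms(2) hdist_def x_y_z_def)
  then show ?thesis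
    using cosh_law_obtuse_angle_bound[OF xyz gram] assms(8) by (simp add: angles)
qed

end
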